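(* Every $2$-transitive affine permutation group of degree at least $3$ contains a quasi-semiregular element.
   Context: An affine permutation group is a subgroup $G=VG_0\le\mathrm{AGL}(d,q)$ containing the translation group $V=\mathbb F_q^d$, acting on $V$. A permutation $g$ is quasi-semiregular if $\langle g\rangle$ has a unique fixed point and acts semiregularly (only the identity fixes a point) on the remaining points. *)

theory Defs
  imports "HOL-Analysis.Analysis"
begin

text \<open>V = F_q^d is modelled as 'f ^ 'd with 'f a finite field and 'd a finite index type
(d = CARD('d)). AGL(d,q) = maps x |-> A x + b with A an invertible d x d matrix over F_q.\<close>

definition AGL :: "(('f::{finite,field}) ^ 'd \<Rightarrow> 'f ^ 'd) set" where
  "AGL = {g. \<exists>(A::'f^'d^'d) b. invertible A \<and> (\<forall>x. g x = A *v x + b)}"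

definition translation :: "('f::{finite,field}) ^ 'd \<Rightarrow> 'f ^ 'd \<Rightarrow> 'f ^ 'd" where
  "translation b = (\<lambda>x. x + b)"

definition perm_group :: "('a \<Rightarrow> 'a) set \<Rightarrow> bool" where
  "perm_group G \<longleftrightarrow> id \<in> G \<and> (\<forall>g\<in>G. bij g) \<and> (\<forall>g\<in>G. \<forall>h\<in>G. g \<circ> h \<in> G)
     \<and> (\<forall>g\<in>G. inv g \<in> G)"

definition affine_perm_group :: "(('f::{finite,field}) ^ 'd \<Rightarrow> 'f ^ 'd) set \<Rightarrow> bool" where
  "affine_perm_group G \<longleftrightarrow> perm_group G \<and> G \<subseteq> AGL \<and> range translation \<subseteq> G"

definition two_transitive :: "('a \<Rightarrow> 'a) set \<Rightarrow> bool" where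
  "two_transitive G \<longleftrightarrow> (\<forall>x1 x2 y1 y2. x1 \<noteq> x2 \<longrightarrow> y1 \<noteq> y2 \<longrightarrow>
      (\<exists>g\<in>G. g x1 = y1 \<and> g x2 = y2))"

definition quasi_semiregular :: "('a \<Rightarrow> 'a) \<Rightarrow> bool" where
  "quasi_semiregular g \<longleftrightarrow> (\<exists>v. (\<forall>k. (g ^^ k) v = v) \<and>
      (\<forall>u. (\<forall>k. (g ^^ k) u = u) \<longrightarrow> u = v) \<and>
      (\<forall>k w. w \<noteq> v \<longrightarrow> (g ^^ k) w = w \<longrightarrow> g ^^ k = id))"

end

theory Submission
  imports Defs "HOL-Computational_Algebra.Polynomial_Factorial"
    "HOL-Computational_Algebra.Fundamental_Theorem_Algebra"
    "HOL-Algebra.Sylow" "HOL-Algebra.Group_Action" "HOL-Algebra.Multiplicative_Group"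
begin

(* Let G_0 be the stabilizer of 0. It acts linearly on V = F_q^d and, by 2-transitivity,
   transitively on the q^d - 1 nonzero vectors. A weak form of Zsigmondy's theorem gives a prime
   r and k > 0 with r^k dividing q^d - 1 but no q^e - 1 for 0 < e < d. Every orbit of a Sylow
   r-subgroup R of G_0 on nonzero vectors then has size divisible by r^k. Take z central of order
   r in R: its fixed space W is an R-invariant subspace, so r^k divides |W| - 1 = q^e - 1 with
   e < d, which forces W = 0. As z has prime order, every nontrivial power of z fixes only 0. *)

section \<open>A weak Zsigmondy theorem\<close>

lemma power_sub_one_dvd_power_mult_sub_one:
  fixes x :: "'a::comm_ring_1"
  shows "x ^ e - 1 dvd x ^ (e * k) - 1"
proof -
  have "(x ^ e) ^ k - 1 ^ k = (x ^ e - 1) * (\<Sum>i<k. 1 ^ (k - Suc i) * (x ^ e) ^ i)"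
    by (rule power_diff_sumr2)
  then show ?thesis by (simp add: power_mult)
qed

lemma dvd_power_gcd_sub_one:
  fixes x k :: "'a::comm_ring_1"
  assumes "k dvd x ^ m - 1" and "k dvd x ^ n - 1"
  shows "k dvd x ^ gcd m n - 1"
  using assms
proof (induction m n rule: gcd_nat_induct)
  case (base m)
  then show ?case by simp
next
  case (step m n)
  have "x ^ m = x ^ (m mod n) * x ^ (n * (m div n))"
    by (metis mult.commute div_mult_mod_eq power_add)
  then have "x ^ (m mod n) - 1 = (x ^ m - 1) - x ^ (m mod n) * (x ^ (n * (m div n)) - 1)"
    by (simp add: algebra_simps)
  moreover have "k dvd x ^ (n * (m div n)) - 1"
    using step.prems(2) power_sub_one_dvd_power_mult_sub_one dvd_trans by blast
  ultimately have "k dvd x ^ (m mod n) - 1"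
    using step.prems(1) by (metis dvd_diff dvd_mult)
  then show ?case
    using step.IH step.prems(2) by (metis gcd_red_nat)
qed

lemma dvd_if_prime_power_parts_dvd:
  fixes m n :: "'a::factorial_semiring"
  assumes "m \<noteq> 0" and "n \<noteq> 0"
    and "\<And>p. prime p \<Longrightarrow> p dvd m \<Longrightarrow> p ^ multiplicity p m dvd n"
  shows "m dvd n"
proof (rule multiplicity_le_imp_dvd[OF assms(1)])
  fix p :: 'a
  assume "prime p"
  show "multiplicity p m \<le> multiplicity p n"
  proof (cases "p dvd m")
    case True
    then show ?thesis
      using assms(2,3) \<open>prime p\<close> by (intro multiplicity_geI) (auto simp: not_prime_unit)
  qed (simp add: not_dvd_imp_multiplicity_0)
qed

lemma map_poly_of_int_mult:
  "map_poly (of_int :: int \<Rightarrow> 'a::comm_ring_1) (p * q) = map_poly of_int p * map_poly of_int q"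
  by (simp add: poly_eq_iff coeff_mult coeff_map_poly)

lemma map_poly_of_int_diff:
  "map_poly (of_int :: int \<Rightarrow> 'a::comm_ring_1) (p - q) = map_poly of_int p - map_poly of_int q"
  by (simp add: poly_eq_iff coeff_map_poly)

lemma map_poly_of_int_X: "map_poly (of_int :: int \<Rightarrow> 'a::comm_ring_1) [:0, 1:] = [:0, 1:]"
  by (simp add: poly_eq_iff coeff_map_poly coeff_pCons split: nat.split)

lemma map_poly_of_int_power:
  "map_poly (of_int :: int \<Rightarrow> 'a::comm_ring_1) (p ^ n) = map_poly of_int p ^ n"
  by (induction n) (simp_all add: map_poly_of_int_mult)

lemma map_poly_of_int_prod:
  "map_poly (of_int :: int \<Rightarrow> 'a::comm_ring_1) (\<Prod>e\<in>A. f e) = (\<Prod>e\<in>A. map_poly of_int (f e))"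
  by (induction A rule: infinite_finite_induct) (simp_all add: map_poly_of_int_mult)

lemma poly_map_poly_of_int:
  "poly (map_poly (of_int :: int \<Rightarrow> 'a::comm_ring_1) p) (of_int x) = of_int (poly p x)"
  by (induction p) (simp_all add: map_poly_pCons)

lemma norm_of_real_sub_unimodular_gt_one:
  fixes z :: complex and q :: real
  assumes "norm z = 1" "z \<noteq> 1" "2 \<le> q"
  shows "1 < norm (of_real q - z)"
proof -
  have circle: "(Re z)\<^sup>2 + (Im z)\<^sup>2 = 1"
    using assms(1) by (metis cmod_power2 one_power2)
  have "Re z < 1"
  proof -
    have "Re z \<noteq> 1"
      using circle assms(2) by (auto simp: complex_eq_iff)
    then show ?thesis using assms(1) complex_Re_le_cmod[of z] by simp
  qed
  have "(norm (of_real q - z))\<^sup>2 = (q - Re z)\<^sup>2 + (Im z)\<^sup>2"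
    by (simp add: cmod_power2)
  also have "\<dots> = 1 + q * (q - 2 * Re z)"
    using circle by (simp add: power2_eq_square algebra_simps)
  also have "\<dots> > 1"
    using \<open>Re z < 1\<close> assms(3) by simp
  finally show ?thesis
    by (meson norm_ge_zero not_less power_le_one)
qed

lemma norm_prod_mset_gt_one:
  fixes f :: "'b \<Rightarrow> 'a::real_normed_field"
  assumes "M \<noteq> {#}" and "\<forall>x\<in>#M. 1 < norm (f x)"
  shows "1 < norm (\<Prod>x\<in>#M. f x)"
  using assms
proof (induction M)
  case empty
  then show ?case by simp
next
  case (add x M)
  then show ?case
    by (cases "M = {#}") (simp_all add: norm_mult less_1_mult)
qed

lemma norm_poly_gt_one_if_roots_unimodular:
  fixes p :: "complex poly" and q :: real
  assumes "0 < degree p" and "1 \<le> norm (lead_coeff p)" and "2 \<le> q"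
    and roots: "\<And>z. poly p z = 0 \<Longrightarrow> norm z = 1 \<and> z \<noteq> 1"
  shows "1 < norm (poly p (of_real q))"
proof -
  have "p \<noteq> 0" using assms(1) by auto
  have "poly p (of_real q) = poly (Polynomial.smult (lead_coeff p) (\<Prod>z\<in>#proots p. [:-z, 1:])) (of_real q)"
    by (simp only: complex_poly_decompose_multiset)
  then have decomp: "poly p (of_real q) = lead_coeff p * (\<Prod>z\<in>#proots p. of_real q - z)"
    by (simp add: poly_prod_mset)
  have "proots p \<noteq> {#}"
  proof
    assume "proots p = {#}"
    then have "p = [:lead_coeff p:]"
      using complex_poly_decompose_multiset[of p] by simp
    then have "degree p = 0" by (metis degree_pCons_0)
    with assms(1) show False by simp
  qed
  moreover have "\<forall>z\<in>#proots p. 1 < norm (of_real q - z)"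
    using roots norm_of_real_sub_unimodular_gt_one \<open>p \<noteq> 0\<close> assms(3) by auto
  ultimately have "1 < norm (\<Prod>z\<in>#proots p. of_real q - z)"
    by (rule norm_prod_mset_gt_one)
  then show ?thesis
    using decomp assms(2) by (simp add: norm_mult) (metis less_le_trans mult_le_cancel_right1 norm_ge_zero not_less)
qed

lemma poly_cofactor_at_one_nonzero:
  fixes l h :: "int poly"
  assumes "1 \<le> d" and factor: "[:0, 1:] ^ d - 1 = l * h" and "[:0, 1:] - 1 dvd l"
  shows "poly h 1 \<noteq> 0"
proof -
  let ?X = "[:0, 1:] :: int poly"
  obtain l' where "l = (?X - 1) * l'"
    using assms(3) by blast
  moreover have "?X ^ d - 1 = (?X - 1) * (\<Sum>i<d. ?X ^ i)"
    using power_diff_sumr2[of ?X d 1] by simp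
  moreover have "?X - 1 \<noteq> 0"
    by (metis one_neq_zero poly_0 poly_1 poly_diff poly_pCons mult_zero_left add_0 right_minus_eq)
  ultimately have "(\<Sum>i<d. ?X ^ i) = l' * h"
    using factor by (metis mult.assoc mult_left_cancel)
  moreover have "poly (\<Sum>i<d. ?X ^ i) 1 = of_nat d"
    by (simp add: poly_sum)
  ultimately have "poly l' 1 * poly h 1 = of_nat d"
    by (metis poly_mult)
  then show ?thesis
    using assms(1) by auto
qed

lemma abs_lead_coeff_factor_power_sub_one:
  fixes l h :: "int poly"
  assumes "1 \<le> d" and "[:0, 1:] ^ d - 1 = l * h"
  shows "\<bar>lead_coeff h\<bar> = 1"
proof -
  let ?X = "[:0, 1:] :: int poly"
  have "lead_coeff (?X ^ d - 1) = lead_coeff (- 1 + ?X ^ d)"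
    by simp
  also have "\<dots> = lead_coeff (?X ^ d)"
    by (rule lead_coeff_add_le) (use assms(1) in \<open>simp add: degree_power_eq\<close>)
  also have "\<dots> = 1"
    by (simp add: lead_coeff_power)
  finally have "lead_coeff l * lead_coeff h = 1"
    by (simp add: assms(2) lead_coeff_mult)
  then show ?thesis
    by (metis abs_1 abs_mult zmult_eq_1_iff abs_minus_cancel)
qed

lemma poly_nonzero_at_primitive_root_of_unity:
  fixes l :: "int poly"
  assumes "l dvd (\<Prod>e\<in>D. [:0, 1:] ^ e - 1)" and "finite D" and "\<forall>e\<in>D. 0 < e \<and> e < d"
  shows "poly (map_poly of_int l) (exp (2 * of_real pi * \<i> / of_nat d)) \<noteq> (0 :: complex)"
proof
  define \<zeta> :: complex where "\<zeta> = exp (2 * of_real pi * \<i> / of_nat d)"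
  assume "poly (map_poly of_int l) \<zeta> = 0"
  obtain t where t: "(\<Prod>e\<in>D. [:0, 1:] ^ e - 1) = l * t"
    using assms(1) by blast
  have "map_poly (of_int :: int \<Rightarrow> complex) (\<Prod>e\<in>D. [:0, 1:] ^ e - 1)
      = map_poly of_int l * map_poly of_int t"
    unfolding t by (simp add: map_poly_of_int_mult)
  then have "(\<Prod>e\<in>D. [:0, 1:] ^ e - 1) = map_poly of_int l * map_poly (of_int :: int \<Rightarrow> complex) t"
    by (simp add: map_poly_of_int_prod map_poly_of_int_diff map_poly_of_int_power map_poly_of_int_X)
  then have "poly (\<Prod>e\<in>D. [:0, 1:] ^ e - 1) \<zeta> = 0"
    using \<open>poly (map_poly of_int l) \<zeta> = 0\<close> by simp
  then have "(\<Prod>e\<in>D. \<zeta> ^ e - 1) = 0"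
    by (simp add: poly_prod)
  then obtain e where "e \<in> D" and "\<zeta> ^ e = 1"
    using assms(2) by auto
  moreover have "\<zeta> ^ e = exp (2 * of_real pi * \<i> * of_nat e / of_nat d)"
    unfolding \<zeta>_def by (simp flip: exp_of_nat_mult add: mult_ac)
  moreover have "1 \<le> d"
    using \<open>e \<in> D\<close> assms(3) by fastforce
  ultimately have "d dvd e"
    using complex_root_unity_eq_1[of d e] by simp
  then show False
    using \<open>e \<in> D\<close> assms(3) by (meson dvd_imp_le not_le)
qed

(* The roots of h are d-th roots of unity other than 1, and a primitive one is among them,
   so |h(q)| is a nonempty product of distances |q - z| > 1. *)
lemma abs_poly_cofactor_gt_one:
  fixes l h :: "int poly" and D :: "nat set" and q :: int
  assumes "2 \<le> d" and "2 \<le> q" and factor: "[:0, 1:] ^ d - 1 = l * h"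
    and "[:0, 1:] - 1 dvd l" and "l dvd (\<Prod>e\<in>D. [:0, 1:] ^ e - 1)"
    and "finite D" and "\<forall>e\<in>D. 0 < e \<and> e < d"
  shows "1 < \<bar>poly h q\<bar>"
proof -
  define hc where "hc = map_poly (of_int :: int \<Rightarrow> complex) h"
  define lc where "lc = map_poly (of_int :: int \<Rightarrow> complex) l"
  define \<zeta> :: complex where "\<zeta> = exp (2 * of_real pi * \<i> / of_nat d)"
  have factor_complex: "z ^ d - 1 = poly lc z * poly hc z" for z
  proof -
    have "map_poly (of_int :: int \<Rightarrow> complex) ([:0, 1:] ^ d - 1) = lc * hc"
      unfolding lc_def hc_def factor by (simp add: map_poly_of_int_mult)
    then have "[:0, 1:] ^ d - 1 = lc * hc"
      by (simp add: map_poly_of_int_diff map_poly_of_int_power map_poly_of_int_X)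
    then have "poly ([:0, 1:] ^ d - 1) z = poly (lc * hc) z"
      by simp
    then show ?thesis
      by simp
  qed
  have "poly hc 1 \<noteq> 0"
    using poly_cofactor_at_one_nonzero[of d l h] poly_map_poly_of_int[of h 1, where 'a = complex]
      assms(1,3,4) unfolding hc_def by simp
  have roots: "norm z = 1 \<and> z \<noteq> 1" if "poly hc z = 0" for z
  proof
    have "norm z ^ d = 1"
      using factor_complex[of z] that by (metis norm_one norm_power right_minus_eq mult_zero_right)
    then show "norm z = 1"
      using assms(1) power_eq_imp_eq_base[of "norm z" d 1] by simp
    show "z \<noteq> 1"
      using that \<open>poly hc 1 \<noteq> 0\<close> by auto
  qed
  have "\<zeta> ^ d = 1"
    using complex_root_unity[of d 1] assms(1) unfolding \<zeta>_def by simp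
  moreover have "poly lc \<zeta> \<noteq> 0"
    unfolding lc_def \<zeta>_def using assms(5-7) by (rule poly_nonzero_at_primitive_root_of_unity)
  ultimately have "poly hc \<zeta> = 0"
    using factor_complex[of \<zeta>] by simp
  then have "0 < degree hc"
    using \<open>poly hc 1 \<noteq> 0\<close> by (metis degree_0_id poly_const_conv gr0I)
  moreover have "norm (lead_coeff hc) = 1"
    using abs_lead_coeff_factor_power_sub_one[of d l h] assms(1,3) unfolding hc_def
    by (subst lead_coeff_map_poly_nz) auto
  ultimately have "1 < norm (poly hc (of_real (of_int q)))"
    using roots assms(2) by (intro norm_poly_gt_one_if_roots_unimodular) auto
  moreover have "poly hc (of_real (of_int q)) = of_int (poly h q)"
    unfolding hc_def of_real_of_int_eq by (rule poly_map_poly_of_int)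
  ultimately have "1 < norm (of_int (poly h q) :: complex)"
    by simp
  then show ?thesis
    by (simp only: norm_of_int)
qed

lemma power_sub_one_eq_lower_part_times_large_cofactor:
  fixes q :: int
  assumes "2 \<le> q" and "2 \<le> d"
  obtains a b where "q ^ d - 1 = a * b" and "1 < \<bar>b\<bar>"
    and "\<And>e. 0 < e \<Longrightarrow> e < d \<Longrightarrow> e dvd d \<Longrightarrow> q ^ e - 1 dvd a"
proof -
  let ?X = "[:0, 1:] :: int poly"
  define D where "D = {e. 0 < e \<and> e < d \<and> e dvd d}"
  define l where "l = gcd (?X ^ d - 1) (\<Prod>e\<in>D. ?X ^ e - 1)"
  obtain h where factor: "?X ^ d - 1 = l * h"
    unfolding l_def by (metis gcd_dvd1 dvdE)
  have "finite D"
    unfolding D_def by (rule finite_subset[of _ "{..<d}"]) auto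
  have lower_dvd_l: "?X ^ e - 1 dvd l" if "e \<in> D" for e
  proof -
    from that have "e dvd d" unfolding D_def by simp
    then obtain k where "d = e * k" ..
    then have "?X ^ e - 1 dvd ?X ^ d - 1"
      using power_sub_one_dvd_power_mult_sub_one by metis
    moreover have "?X ^ e - 1 dvd (\<Prod>e\<in>D. ?X ^ e - 1)"
      using that \<open>finite D\<close> by (intro dvd_prodI)
    ultimately show ?thesis
      unfolding l_def by (rule gcd_greatest)
  qed
  have "1 < \<bar>poly h q\<bar>"
  proof (rule abs_poly_cofactor_gt_one[OF assms(2,1) factor])
    show "?X - 1 dvd l"
      using lower_dvd_l[of 1] assms(2) unfolding D_def by simp
    show "l dvd (\<Prod>e\<in>D. ?X ^ e - 1)"
      unfolding l_def by (rule gcd_dvd2)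
  qed (use \<open>finite D\<close> D_def in auto)
  moreover have "q ^ d - 1 = poly l q * poly h q"
    using arg_cong[OF factor, of "\<lambda>p. poly p q"] by simp
  moreover have "q ^ e - 1 dvd poly l q" if e: "0 < e" "e < d" "e dvd d" for e
  proof -
    obtain t where "l = (?X ^ e - 1) * t"
      using lower_dvd_l[of e] e unfolding D_def by blast
    then show ?thesis
      by simp
  qed
  ultimately show ?thesis
    using that by blast
qed

lemma weak_zsigmondy_int:
  fixes q :: int
  assumes "2 \<le> q" and "2 \<le> d"
  shows "\<exists>r k. prime r \<and> 0 < k \<and> r ^ k dvd q ^ d - 1 \<and>
    (\<forall>e. 0 < e \<and> e < d \<longrightarrow> \<not> r ^ k dvd q ^ e - 1)"
proof (rule ccontr)
  assume no_prime: "\<not> ?thesis"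
  obtain a b where factor: "q ^ d - 1 = a * b" and "1 < \<bar>b\<bar>"
    and lower_dvd: "\<And>e. 0 < e \<Longrightarrow> e < d \<Longrightarrow> e dvd d \<Longrightarrow> q ^ e - 1 dvd a"
    using power_sub_one_eq_lower_part_times_large_cofactor[OF assms] by blast
  have "1 < q ^ d"
    using assms by (intro one_less_power) auto
  then have "a \<noteq> 0"
    using factor by auto
  have "q ^ d - 1 dvd a"
  proof (rule dvd_if_prime_power_parts_dvd)
    show "q ^ d - 1 \<noteq> 0"
      using \<open>1 < q ^ d\<close> by simp
    fix r :: int
    let ?k = "multiplicity r (q ^ d - 1)"
    assume "prime r" and "r dvd q ^ d - 1"
    then have "0 < ?k"
      using \<open>1 < q ^ d\<close> prime_gt_1_int[OF \<open>prime r\<close>] multiplicity_geI[of "q ^ d - 1" r 1]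
      by simp
    moreover have "r ^ ?k dvd q ^ d - 1"
      by (rule multiplicity_dvd)
    ultimately obtain e where e: "0 < e" "e < d" "r ^ ?k dvd q ^ e - 1"
      using no_prime \<open>prime r\<close> by blast
    then have "r ^ ?k dvd q ^ gcd d e - 1"
      using \<open>r ^ ?k dvd q ^ d - 1\<close> dvd_power_gcd_sub_one by blast
    moreover have "q ^ gcd d e - 1 dvd a"
      using e by (intro lower_dvd) (auto intro: le_less_trans[OF gcd_le2_nat])
    ultimately show "r ^ ?k dvd a"
      by (rule dvd_trans)
  qed (fact \<open>a \<noteq> 0\<close>)
  then have "\<bar>q ^ d - 1\<bar> \<le> \<bar>a\<bar>"
    using \<open>a \<noteq> 0\<close> by (rule dvd_imp_le_int[rotated])
  then show False
    using factor \<open>1 < \<bar>b\<bar>\<close> \<open>a \<noteq> 0\<close> by (simp add: abs_mult)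
qed

lemma weak_zsigmondy:
  fixes q d :: nat
  assumes "2 \<le> q" and "1 \<le> d" and "3 \<le> q ^ d"
  shows "\<exists>r k. prime r \<and> 0 < k \<and> r ^ k dvd q ^ d - 1 \<and>
    (\<forall>e. 0 < e \<and> e < d \<longrightarrow> \<not> r ^ k dvd q ^ e - 1)"
proof (cases "d = 1")
  case True
  have "q ^ d - 1 \<noteq> 1" using assms(3) by simp
  then obtain r where "prime r" "r dvd q ^ d - 1"
    using prime_factor_nat by blast
  then show ?thesis
    using True by (intro exI[of _ r] exI[of _ 1]) auto
next
  case False
  have of_nat_power_sub_one: "int (q ^ e - 1) = int q ^ e - 1" for e
    using assms(1) by (simp add: of_nat_diff)
  obtain r k where "prime r" "0 < k" "r ^ k dvd int q ^ d - 1"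
    and not_lower: "\<forall>e. 0 < e \<and> e < d \<longrightarrow> \<not> r ^ k dvd int q ^ e - 1"
    using weak_zsigmondy_int[of "int q" d] assms False by auto
  define n where "n = nat r"
  have "r = int n"
    unfolding n_def using \<open>prime r\<close> by (simp add: prime_ge_0_int)
  have "prime n"
    using \<open>prime r\<close> unfolding \<open>r = int n\<close> by (simp add: prime_int_nat_transfer)
  moreover have "n ^ k dvd q ^ e - 1 \<longleftrightarrow> r ^ k dvd int q ^ e - 1" for e
  proof -
    have "n ^ k dvd q ^ e - 1 \<longleftrightarrow> int (n ^ k) dvd int (q ^ e - 1)"
      by (rule of_nat_dvd_iff[symmetric])
    then show ?thesis
      unfolding \<open>r = int n\<close> by (simp only: of_nat_power of_nat_power_sub_one)
  qed
  ultimately show ?thesis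
    using \<open>0 < k\<close> \<open>r ^ k dvd int q ^ d - 1\<close> not_lower by blast
qed

section \<open>Actions of groups of prime-power order\<close>

lemma (in group_action) dvd_card_invariant_if_dvd_card_orbits:
  assumes "finite S" and "S \<subseteq> E"
    and invariant: "\<And>g x. g \<in> carrier G \<Longrightarrow> x \<in> S \<Longrightarrow> \<phi> g x \<in> S"
    and orbits_dvd: "\<And>x. x \<in> S \<Longrightarrow> m dvd card (orbit G \<phi> x)"
  shows "m dvd card S"
proof -
  have union: "\<Union> (orbit G \<phi> ` S) = S"
  proof
    show "\<Union> (orbit G \<phi> ` S) \<subseteq> S"
      using invariant unfolding orbit_def by blast
    show "S \<subseteq> \<Union> (orbit G \<phi> ` S)"
      using orbit_refl \<open>S \<subseteq> E\<close> by blast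
  qed
  have "orbit G \<phi> ` S \<subseteq> orbits G E \<phi>"
    using \<open>S \<subseteq> E\<close> unfolding orbits_def by blast
  then have "\<forall>c1\<in>orbit G \<phi> ` S. \<forall>c2\<in>orbit G \<phi> ` S. c1 \<noteq> c2 \<longrightarrow> c1 \<inter> c2 = {}"
    using disjoint_union by blast
  then show ?thesis
    using dvd_partition[of "orbit G \<phi> ` S" m] union \<open>finite S\<close> orbits_dvd by auto
qed

lemma (in group_action) prime_power_group_has_fixed_point:
  assumes "card (carrier G) = p ^ n" and "prime p"
    and "finite S" and "S \<subseteq> E"
    and invariant: "\<And>g x. g \<in> carrier G \<Longrightarrow> x \<in> S \<Longrightarrow> \<phi> g x \<in> S"
    and "\<not> p dvd card S"
  shows "\<exists>x\<in>S. \<forall>g\<in>carrier G. \<phi> g x = x"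
proof (rule ccontr)
  assume no_fixed_point: "\<not> ?thesis"
  have "p dvd card (orbit G \<phi> x)" if "x \<in> S" for x
  proof -
    have "x \<in> E" using that \<open>S \<subseteq> E\<close> by blast
    then have "card (orbit G \<phi> x) * card (stabilizer G \<phi> x) = p ^ n"
      using orbit_stabilizer_theorem assms(1) by (simp add: order_def)
    then obtain i where i: "card (orbit G \<phi> x) = p ^ i"
      using \<open>prime p\<close> by (metis dvd_triv_left divides_primepow_nat)
    have "i \<noteq> 0"
    proof
      assume "i = 0"
      then have "orbit G \<phi> x = {x}"
        using i orbit_refl[OF \<open>x \<in> E\<close>] by (metis card_1_singletonE power_0 singletonD)
      then have "\<forall>g\<in>carrier G. \<phi> g x = x"
        unfolding orbit_def by blast
      then show False
        using no_fixed_point that by blast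
    qed
    then show ?thesis
      using i by simp
  qed
  then have "p dvd card S"
    using assms(3-5) by (rule dvd_card_invariant_if_dvd_card_orbits[rotated 3])
  with assms(6) show False ..
qed

lemma (in group) prime_power_group_has_nontrivial_central_element:
  assumes "card (carrier G) = p ^ n" and "prime p" and "0 < n"
  shows "\<exists>x\<in>carrier G. x \<noteq> \<one> \<and> (\<forall>g\<in>carrier G. g \<otimes> x = x \<otimes> g)"
proof -
  interpret conjugation: group_action G "carrier G" "\<lambda>g. \<lambda>h\<in>carrier G. g \<otimes> h \<otimes> inv g"
    by (rule action_by_conjugation)
  have "finite (carrier G)"
    using assms(1,2) by (metis card_ge_0_finite prime_gt_0_nat zero_less_power)
  have "\<not> p dvd p ^ n - 1"
  proof
    assume "p dvd p ^ n - 1"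
    moreover have "p dvd p ^ n"
      using assms(3) by (simp add: dvd_power)
    ultimately have "p dvd p ^ n - (p ^ n - 1)"
      by (rule dvd_diff_nat[rotated])
    moreover have "p ^ n - (p ^ n - 1) = 1"
      using assms(2) by (simp add: prime_gt_0_nat Suc_leI)
    ultimately show False
      using assms(2) by simp
  qed
  then have "\<not> p dvd card (carrier G - {\<one>})"
    using assms(1) \<open>finite (carrier G)\<close> by (simp add: card_Diff_singleton)
  moreover have "g \<otimes> h \<otimes> inv g \<in> carrier G - {\<one>}"
    if "g \<in> carrier G" and "h \<in> carrier G - {\<one>}" for g h
    using that by (auto simp: inv_solve_right')
  ultimately obtain x where "x \<in> carrier G" and "x \<noteq> \<one>"
    and fixed: "\<forall>g\<in>carrier G. g \<otimes> x \<otimes> inv g = x"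
    using conjugation.prime_power_group_has_fixed_point[OF assms(1,2), of "carrier G - {\<one>}"]
      \<open>finite (carrier G)\<close> by auto
  moreover have "g \<otimes> x = x \<otimes> g" if "g \<in> carrier G" for g
    using fixed that \<open>x \<in> carrier G\<close> by (metis inv_solve_right m_closed)
  ultimately show ?thesis
    by blast
qed

lemma (in group) prime_power_group_has_central_element_of_prime_order:
  assumes "card (carrier G) = p ^ n" and "prime p" and "0 < n"
  shows "\<exists>z\<in>carrier G. z \<noteq> \<one> \<and> z [^] p = \<one> \<and> (\<forall>g\<in>carrier G. g \<otimes> z = z \<otimes> g)"
proof -
  obtain x where x: "x \<in> carrier G" "x \<noteq> \<one>" and central: "\<forall>g\<in>carrier G. g \<otimes> x = x \<otimes> g"
    using prime_power_group_has_nontrivial_central_element[OF assms] by blast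
  obtain j where "ord x = p ^ j"
    using ord_dvd_group_order[OF x(1)] assms(1,2) by (auto simp: order_def divides_primepow_nat)
  moreover have "j \<noteq> 0"
    using \<open>ord x = p ^ j\<close> x ord_eq_1 by (metis power_0)
  ultimately have ord_x: "ord x = p ^ (j - 1) * p"
    by (metis Suc_diff_1 neq0_conv power_Suc2)
  define z where "z = x [^] (p ^ (j - 1))"
  have "z [^] p = \<one>"
    unfolding z_def using x(1) ord_x by (metis nat_pow_pow pow_ord_eq_1)
  moreover have "z \<noteq> \<one>"
  proof
    assume "z = \<one>"
    then have "p ^ (j - 1) * p dvd p ^ (j - 1)"
      unfolding z_def using x(1) ord_x by (simp add: pow_eq_id)
    then show False
      using assms(2) by simp
  qed
  moreover have "g \<otimes> z = z \<otimes> g" if "g \<in> carrier G" for g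
    unfolding z_def using central that x(1) by (simp add: group_commutes_pow)
  ultimately show ?thesis
    using x(1) z_def by blast
qed

lemma (in group) card_Int_subgroup_dvd:
  assumes "subgroup H G" and "subgroup K G"
  shows "card (H \<inter> K) dvd card K"
proof -
  have "subgroup (H \<inter> K) (G\<lparr>carrier := K\<rparr>)"
    using subgroups_Inter_pair[OF assms] assms(2) by (intro subgroup_incl) auto
  then have "card (rcosets\<^bsub>G\<lparr>carrier := K\<rparr>\<^esub> (H \<inter> K)) * card (H \<inter> K) = card K"
    using group.lagrange[OF subgroup.subgroup_is_group[OF assms(2) is_group]]
    by (simp add: order_def)
  then show ?thesis
    by (metis dvd_triv_right)
qed

lemma (in group_action) subgroup_action:
  assumes "subgroup H G"
  shows "group_action (G\<lparr>carrier := H\<rparr>) E \<phi>"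
proof -
  have "\<phi> \<in> hom (G\<lparr>carrier := H\<rparr>) (BijGroup E)"
    using group_hom subgroup.subset[OF assms]
    unfolding group_hom_def group_hom_axioms_def hom_def by auto
  then show ?thesis
    using subgroup.subgroup_is_group[OF assms group_hom.axioms(1)[OF group_hom]] group_BijGroup
    unfolding group_action_def group_hom_def group_hom_axioms_def by simp
qed

lemma (in group_action) sylow_subgroup_orbit_card_dvd:
  assumes "finite (carrier G)" and "prime p" and "subgroup P G"
    and card_P: "card P = p ^ multiplicity p (order G)" and "x \<in> E"
  shows "p ^ multiplicity p (card (orbit G \<phi> x)) dvd card (orbit (G\<lparr>carrier := P\<rparr>) \<phi> x)"
proof -
  interpret G: group G
    using group_hom group_hom.axioms(1) by blast
  interpret P: group_action "G\<lparr>carrier := P\<rparr>" E \<phi>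
    using assms(3) by (rule subgroup_action)
  define T where "T = stabilizer G \<phi> x"
  define a where "a = multiplicity p (card (orbit G \<phi> x))"
  define b where "b = multiplicity p (order G)"
  have orbit_T: "card (orbit G \<phi> x) * card T = order G"
    unfolding T_def using orbit_stabilizer_theorem[OF \<open>x \<in> E\<close>] .
  have "order G \<noteq> 0"
    using assms(1) G.order_gt_0_iff_finite by simp
  then have "card T \<noteq> 0" and "card (orbit G \<phi> x) \<noteq> 0"
    using orbit_T by (metis mult_zero_right, metis mult_zero_left)
  then have b_split: "b = a + multiplicity p (card T)"
    unfolding a_def b_def orbit_T[symmetric] using \<open>prime p\<close>
    by (simp add: prime_elem_multiplicity_mult_distrib)
  have "stabilizer (G\<lparr>carrier := P\<rparr>) \<phi> x = P \<inter> T"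
    unfolding T_def stabilizer_def using subgroup.subset[OF assms(3)] by auto
  then have orbit_P: "card (orbit (G\<lparr>carrier := P\<rparr>) \<phi> x) * card (P \<inter> T) = p ^ b"
    using P.orbit_stabilizer_theorem[OF \<open>x \<in> E\<close>] card_P unfolding b_def order_def by simp
  then obtain j where j: "j \<le> b" "card (P \<inter> T) = p ^ j"
    using \<open>prime p\<close> by (metis dvd_triv_right divides_primepow_nat)
  have "card (P \<inter> T) dvd card T"
    unfolding T_def using assms(3) stabilizer_subgroup[OF \<open>x \<in> E\<close>] by (rule G.card_Int_subgroup_dvd)
  then have "j \<le> multiplicity p (card T)"
    using j(2) \<open>card T \<noteq> 0\<close> \<open>prime p\<close> by (intro multiplicity_geI) (auto simp: not_prime_unit)
  moreover have "card (orbit (G\<lparr>carrier := P\<rparr>) \<phi> x) = p ^ (b - j)"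
    using orbit_P j \<open>prime p\<close> by (metis le_add_diff_inverse2 power_add mult_right_cancel
        prime_gt_0_nat power_not_zero neq0_conv)
  ultimately show ?thesis
    unfolding a_def[symmetric] using b_split by (simp add: le_imp_power_dvd)
qed

lemma (in group_action) exists_sylow_subgroup_orbit_card_dvd:
  assumes "finite (carrier G)" and "prime p" and "x0 \<in> E" and "p dvd card (orbit G \<phi> x0)"
  obtains P n where "subgroup P G" and "card P = p ^ n" and "0 < n"
    and "\<And>x. x \<in> E \<Longrightarrow>
      p ^ multiplicity p (card (orbit G \<phi> x)) dvd card (orbit (G\<lparr>carrier := P\<rparr>) \<phi> x)"
proof -
  interpret G: group G
    using group_hom group_hom.axioms(1) by blast
  define n where "n = multiplicity p (order G)"
  obtain P where "subgroup P G" and "card P = p ^ n"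
    using sylow_thm[of p G n "order G div p ^ n"] assms(1,2) G.is_group
    unfolding n_def by (auto simp: multiplicity_dvd)
  moreover have "0 < n"
  proof -
    have "p dvd order G"
      using orbit_stabilizer_theorem[OF assms(3)] assms(4) by (metis dvd_mult2)
    moreover have "order G \<noteq> 0"
      using assms(1) G.order_gt_0_iff_finite by simp
    ultimately show ?thesis
      unfolding n_def using assms(2) by (simp add: prime_multiplicity_gt_zero_iff)
  qed
  ultimately show ?thesis
    using that sylow_subgroup_orbit_card_dvd[OF assms(1,2)] unfolding n_def by blast
qed

lemma (in group_action) sylow_subgroup_with_central_element_of_prime_order:
  assumes "finite (carrier G)" and "prime p" and "x0 \<in> E" and "p dvd card (orbit G \<phi> x0)"
  obtains P z where "subgroup P G" and "z \<in> P" and "z \<noteq> \<one>" and "z [^] p = \<one>"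
    and "\<And>g. g \<in> P \<Longrightarrow> g \<otimes> z = z \<otimes> g"
    and "\<And>x. x \<in> E \<Longrightarrow>
      p ^ multiplicity p (card (orbit G \<phi> x)) dvd card (orbit (G\<lparr>carrier := P\<rparr>) \<phi> x)"
proof -
  interpret G: group G
    using group_hom group_hom.axioms(1) by blast
  obtain P n where "subgroup P G" and "card P = p ^ n" and "0 < n"
    and "\<And>x. x \<in> E \<Longrightarrow>
      p ^ multiplicity p (card (orbit G \<phi> x)) dvd card (orbit (G\<lparr>carrier := P\<rparr>) \<phi> x)"
    using exists_sylow_subgroup_orbit_card_dvd[OF assms] by blast
  moreover obtain z where "z \<in> P" and "z \<noteq> \<one>" and "z [^]\<^bsub>G\<lparr>carrier := P\<rparr>\<^esub> p = \<one>"
    and "\<forall>g\<in>P. g \<otimes> z = z \<otimes> g"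
    using group.prime_power_group_has_central_element_of_prime_order[OF
        subgroup.subgroup_is_group[OF \<open>subgroup P G\<close> G.is_group] _ \<open>prime p\<close> \<open>0 < n\<close>]
      \<open>card P = p ^ n\<close> by auto
  ultimately show ?thesis
    using that G.nat_pow_consistent by metis
qed

section \<open>Permutation groups\<close>

definition perm_monoid :: "('a \<Rightarrow> 'a) set \<Rightarrow> ('a \<Rightarrow> 'a) monoid" where
  "perm_monoid S = \<lparr>carrier = S, monoid.mult = (\<circ>), one = id\<rparr>"

lemma perm_monoid_simps [simp]:
  "carrier (perm_monoid S) = S" "monoid.mult (perm_monoid S) = (\<circ>)" "one (perm_monoid S) = id"
  by (simp_all add: perm_monoid_def)

lemma perm_monoid_update [simp]: "(perm_monoid S)\<lparr>carrier := R\<rparr> = perm_monoid R"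
  by (simp add: perm_monoid_def)

lemma perm_monoid_pow [simp]: "f [^]\<^bsub>perm_monoid S\<^esub> (n::nat) = f ^^ n"
  by (induction n) (simp_all add: comp_def funpow_swap1)

lemma group_perm_monoid:
  assumes "perm_group S"
  shows "group (perm_monoid S)"
proof (rule groupI)
  fix f
  assume "f \<in> carrier (perm_monoid S)"
  moreover have "inv_into UNIV f \<circ> f = id"
    using \<open>f \<in> carrier (perm_monoid S)\<close> assms unfolding perm_group_def
    by (simp add: bij_is_inj inv_o_cancel)
  ultimately show "\<exists>g\<in>carrier (perm_monoid S). g \<otimes>\<^bsub>perm_monoid S\<^esub> f = \<one>\<^bsub>perm_monoid S\<^esub>"
    using assms unfolding perm_group_def by auto
qed (use assms in \<open>auto simp: perm_group_def comp_assoc\<close>)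

lemma group_action_perm_monoid:
  assumes "perm_group S"
  shows "group_action (perm_monoid S) UNIV (\<lambda>g. g)"
proof -
  have "g \<in> Bij UNIV" if "g \<in> S" for g
    using assms that unfolding perm_group_def by (auto simp: Bij_def extensional_def bij_def)
  then have "(\<lambda>g. g) \<in> hom (perm_monoid S) (BijGroup UNIV)"
    by (intro homI) (auto simp: BijGroup_def compose_def comp_def)
  then show ?thesis
    using group_perm_monoid[OF assms] group_BijGroup
    unfolding group_action_def group_hom_def group_hom_axioms_def by auto
qed

lemma perm_group_point_stabilizer:
  assumes "perm_group G"
  shows "perm_group {g \<in> G. g a = a}"
proof -
  have "inv_into UNIV g a = a" if "g \<in> G" "g a = a" for g
    using assms that unfolding perm_group_def by (metis bij_is_inj inv_f_f)
  then show ?thesis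
    using assms unfolding perm_group_def by auto
qed

lemma quasi_semiregular_if_prime_order:
  assumes "prime p" and "f ^^ p = id" and "f v = v"
    and unique_fixed_point: "\<And>u. f u = u \<Longrightarrow> u = v"
  shows "quasi_semiregular f"
  unfolding quasi_semiregular_def
proof (intro exI[of _ v] conjI allI impI)
  show "(f ^^ k) v = v" for k
    using assms(3) by (induction k) simp_all
  show "u = v" if "\<forall>k. (f ^^ k) u = u" for u
  proof -
    have "(f ^^ 1) u = u" using that by blast
    then show ?thesis using unique_fixed_point by simp
  qed
next
  fix k w
  assume "w \<noteq> v" and "(f ^^ k) w = w"
  have power_mod: "f ^^ n = f ^^ (n mod p)" for n
    by (metis assms(2) funpow_add funpow_mult id_funpow id_comp mult.commute div_mult_mod_eq)
  show "f ^^ k = id"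
  proof (cases "p dvd k")
    case True
    then show ?thesis using power_mod[of k] by simp
  next
    case False
    then have "coprime k p"
      using \<open>prime p\<close> by (metis prime_imp_coprime coprime_commute)
    then obtain u v' where bezout: "k * u = p * v' + 1"
      using False bezout_nat[of k p] by (auto simp: coprime_iff_gcd_eq_1)
    then have "(k * u) mod p = 1 mod p"
      by (simp only: bezout mod_mult_self4)
    then have "f ^^ (k * u) = f"
      using power_mod[of "k * u"] power_mod[of 1] by simp
    then have "f = (f ^^ k) ^^ u"
      by (simp add: funpow_mult)
    moreover have "((f ^^ k) ^^ u) w = w"
      using \<open>(f ^^ k) w = w\<close> by (induction u) simp_all
    ultimately show ?thesis
      using unique_fixed_point \<open>w \<noteq> v\<close> by metis
  qed
qed

section \<open>Linear groups over a finite field\<close>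

lemma (in vector_space) card_span_eq_power:
  assumes "finite S"
  shows "\<exists>e. card (span S) = CARD('a) ^ e"
  using assms
proof (induction S rule: finite_induct)
  case empty
  show ?case by (rule exI[of _ 0]) simp
next
  case (insert x S)
  then obtain e where e: "card (span S) = CARD('a) ^ e" by blast
  show ?case
  proof (cases "x \<in> span S")
    case True
    then show ?thesis using e span_redundant by metis
  next
    case False
    let ?f = "\<lambda>(y, c). y + c *s x"
    have "span (insert x S) = ?f ` (span S \<times> UNIV)"
    proof
      show "span (insert x S) \<subseteq> ?f ` (span S \<times> UNIV)"
        unfolding span_insert by (auto simp: image_iff) (metis diff_add_cancel)
      show "?f ` (span S \<times> UNIV) \<subseteq> span (insert x S)"
        unfolding span_insert by auto (metis add_diff_cancel_right')
    qed
    moreover have "inj_on ?f (span S \<times> UNIV)"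
    proof (rule inj_onI, clarify)
      fix y1 c1 y2 c2
      assume "y1 \<in> span S" "y2 \<in> span S" and eq: "y1 + c1 *s x = y2 + c2 *s x"
      then have "(c1 - c2) *s x \<in> span S"
        by (metis scale_left_diff_distrib span_diff add_diff_cancel_left' diff_add_eq_diff_diff_swap
            add_diff_cancel_right' add.commute)
      then have "c1 = c2"
        using False by (metis eq_iff_diff_eq_0 span_scale scale_scale left_inverse scale_one)
      then show "y1 = y2 \<and> c1 = c2"
        using eq by simp
    qed
    ultimately have "card (span (insert x S)) = card (span S) * CARD('a)"
      by (simp add: card_image card_cartesian_product)
    then show ?thesis
      using e by (metis power_Suc2)
  qed
qed

lemma (in vector_space) card_subspace_eq_power:
  assumes "subspace W" and "finite W"
  shows "\<exists>e. card W = CARD('a) ^ e"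
  using card_span_eq_power[OF assms(2)] assms(1) span_eq_iff by metis

lemma two_le_card_field: "2 \<le> CARD('f::{finite,field})"
proof -
  have "card {0::'f, 1} = 2" by simp
  moreover have "card {0::'f, 1} \<le> CARD('f)" by (rule card_mono) auto
  ultimately show ?thesis by simp
qed

lemma card_fixed_vectors_eq_power:
  fixes z :: "'f::{finite,field} ^ 'd \<Rightarrow> 'f ^ 'd"
  assumes linear: "Vector_Spaces.linear (*s) (*s) z" and "z \<noteq> id"
    and "z w = w" and "w \<noteq> 0"
  obtains e where "0 < e" and "e < CARD('d)" and "card {u. z u = u} = CARD('f) ^ e"
proof -
  define W where "W = {u. z u = u}"
  have "0 \<in> W"
    unfolding W_def using vec.linear_0[OF linear] by simp
  have "vec.subspace W"
    unfolding W_def vec.subspace_def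
    using vec.linear_0[OF linear] vec.linear_add[OF linear] vec.linear_scale[OF linear] by auto
  then obtain e where card_W: "card W = CARD('f) ^ e"
    using vec.card_subspace_eq_power[OF _ finite] by blast
  moreover have "0 < e"
  proof -
    have "card {0, w} \<le> card W"
      using \<open>0 \<in> W\<close> \<open>z w = w\<close> unfolding W_def by (intro card_mono) auto
    then show ?thesis
      using \<open>w \<noteq> 0\<close> card_W by (cases e) auto
  qed
  moreover have "e < CARD('d)"
  proof -
    have "W \<noteq> UNIV"
      using \<open>z \<noteq> id\<close> unfolding W_def by (auto simp: fun_eq_iff)
    then have "card W < CARD('f ^ 'd)"
      by (intro psubset_card_mono) auto
    then have "CARD('f) ^ e < CARD('f) ^ CARD('d)"
      using card_W by simp
    then show ?thesis
      using two_le_card_field[where 'f = 'f] by (intro power_less_imp_less_exp) auto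
  qed
  ultimately show ?thesis
    using that unfolding W_def by blast
qed

lemma fixed_vector_zero_if_orbit_cards_dvd:
  fixes z :: "'f::{finite,field} ^ 'd \<Rightarrow> 'f ^ 'd"
  assumes "group_action (perm_monoid R) UNIV (\<lambda>g. g)"
    and linear: "Vector_Spaces.linear (*s) (*s) z" and "z \<noteq> id"
    and commute: "\<And>g. g \<in> R \<Longrightarrow> g \<circ> z = z \<circ> g"
    and nonzero: "\<And>g w. g \<in> R \<Longrightarrow> w \<noteq> 0 \<Longrightarrow> g w \<noteq> 0"
    and orbits_dvd: "\<And>w. w \<noteq> 0 \<Longrightarrow> m dvd card (orbit (perm_monoid R) (\<lambda>g. g) w)"
    and not_dvd: "\<And>e. 0 < e \<Longrightarrow> e < CARD('d) \<Longrightarrow> \<not> m dvd CARD('f) ^ e - 1"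
    and "z w = w"
  shows "w = 0"
proof (rule ccontr)
  assume "w \<noteq> 0"
  define W where "W = {u. z u = u}"
  obtain e where "0 < e" and "e < CARD('d)" and "card W = CARD('f) ^ e"
    using card_fixed_vectors_eq_power[OF linear \<open>z \<noteq> id\<close> \<open>z w = w\<close> \<open>w \<noteq> 0\<close>]
    unfolding W_def by blast
  have "m dvd card (W - {0})"
  proof (rule group_action.dvd_card_invariant_if_dvd_card_orbits[OF assms(1)])
    show "g u \<in> W - {0}" if "g \<in> carrier (perm_monoid R)" and "u \<in> W - {0}" for g u
      using commute[of g] nonzero[of g u] that unfolding W_def by (auto simp: fun_eq_iff) metis
    show "m dvd card (orbit (perm_monoid R) (\<lambda>g. g) u)" if "u \<in> W - {0}" for u
      using orbits_dvd that by blast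
  qed (rule finite, rule subset_UNIV)
  moreover have "0 \<in> W"
    unfolding W_def using vec.linear_0[OF linear] by simp
  then have "card (W - {0}) = CARD('f) ^ e - 1"
    using \<open>card W = CARD('f) ^ e\<close> by (simp add: card_Diff_singleton)
  ultimately show False
    using not_dvd[OF \<open>0 < e\<close> \<open>e < CARD('d)\<close>] by simp
qed

lemma card_orbit_transitive_on_nonzero:
  fixes G0 :: "('a::{finite,zero} \<Rightarrow> 'a) set"
  assumes nonzero: "\<And>g w. g \<in> G0 \<Longrightarrow> w \<noteq> 0 \<Longrightarrow> g w \<noteq> 0"
    and transitive: "\<And>v w. v \<noteq> 0 \<Longrightarrow> w \<noteq> 0 \<Longrightarrow> \<exists>g\<in>G0. g v = w"
    and "w \<noteq> 0"
  shows "card (orbit (perm_monoid G0) (\<lambda>g. g) w) = CARD('a) - 1"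
proof -
  have "orbit (perm_monoid G0) (\<lambda>g. g) w = UNIV - {0}"
    using assms unfolding orbit_def by fastforce
  then show ?thesis
    by (simp add: card_Diff_singleton)
qed

lemma linear_perm_group_transitive_on_nonzero_has_quasi_semiregular:
  fixes G0 :: "('f::{finite,field} ^ 'd \<Rightarrow> 'f ^ 'd) set"
  assumes "perm_group G0"
    and linear: "\<And>g. g \<in> G0 \<Longrightarrow> Vector_Spaces.linear (*s) (*s) g"
    and transitive: "\<And>v w. v \<noteq> 0 \<Longrightarrow> w \<noteq> 0 \<Longrightarrow> \<exists>g\<in>G0. g v = w"
    and "3 \<le> CARD('f ^ 'd)"
  shows "\<exists>z\<in>G0. quasi_semiregular z"
proof -
  let ?H = "perm_monoid G0"
  let ?N = "CARD('f) ^ CARD('d) - 1"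
  interpret H: group_action ?H UNIV "\<lambda>g. g"
    using assms(1) by (rule group_action_perm_monoid)
  have nonzero: "g w \<noteq> 0" if "g \<in> G0" and "w \<noteq> 0" for g w
    using that vec.linear_0[OF linear[OF that(1)]] assms(1) unfolding perm_group_def
    by (metis bij_is_inj injD)
  have card_orbit: "card (orbit ?H (\<lambda>g. g) w) = ?N" if "w \<noteq> 0" for w
  proof -
    have "card (orbit ?H (\<lambda>g. g) w) = CARD('f ^ 'd) - 1"
      by (rule card_orbit_transitive_on_nonzero) (fact nonzero transitive that)+
    then show ?thesis
      by simp
  qed
  obtain r k where "prime r" and "0 < k" and "r ^ k dvd ?N"
    and not_lower: "\<And>e. 0 < e \<Longrightarrow> e < CARD('d) \<Longrightarrow> \<not> r ^ k dvd CARD('f) ^ e - 1"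
    using weak_zsigmondy[of "CARD('f)" "CARD('d)"] two_le_card_field assms(4) by auto
  have "(\<chi> i. 1) \<noteq> (0 :: 'f ^ 'd)"
    by (simp add: vec_eq_iff)
  moreover have "r dvd ?N"
    using \<open>r ^ k dvd ?N\<close> \<open>0 < k\<close> by (metis dvd_power dvd_trans)
  ultimately obtain R z where "subgroup R ?H" and "z \<in> R" and "z \<noteq> id" and "z ^^ r = id"
    and commute: "\<And>g. g \<in> R \<Longrightarrow> g \<circ> z = z \<circ> g"
    and sylow_orbits: "\<And>w. r ^ multiplicity r (card (orbit ?H (\<lambda>g. g) w))
      dvd card (orbit (perm_monoid R) (\<lambda>g. g) w)"
    using H.sylow_subgroup_with_central_element_of_prime_order[OF _ \<open>prime r\<close>, of "\<chi> i. 1"]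
      card_orbit by (metis finite UNIV_I perm_monoid_simps perm_monoid_update perm_monoid_pow)
  interpret R: group_action "perm_monoid R" UNIV "\<lambda>g. g"
    using H.subgroup_action[OF \<open>subgroup R ?H\<close>] by simp
  have R_orbits: "r ^ k dvd card (orbit (perm_monoid R) (\<lambda>g. g) w)" if "w \<noteq> 0" for w
  proof -
    have "k \<le> multiplicity r ?N"
      using \<open>r ^ k dvd ?N\<close> \<open>prime r\<close> assms(4)
      by (intro multiplicity_geI) (auto simp: not_prime_unit)
    then have "r ^ k dvd r ^ multiplicity r (card (orbit ?H (\<lambda>g. g) w))"
      using card_orbit[OF that] by (simp add: le_imp_power_dvd)
    then show ?thesis
      using sylow_orbits dvd_trans by blast
  qed
  have "z \<in> G0"
    using \<open>z \<in> R\<close> subgroup.subset[OF \<open>subgroup R ?H\<close>] by auto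
  have R_nonzero: "g w \<noteq> 0" if "g \<in> R" and "w \<noteq> 0" for g w
    using nonzero that subgroup.subset[OF \<open>subgroup R ?H\<close>] by auto
  have "w = 0" if "z w = w" for w
    by (rule fixed_vector_zero_if_orbit_cards_dvd[where m = "r ^ k"])
      (fact R.group_action_axioms linear[OF \<open>z \<in> G0\<close>] \<open>z \<noteq> id\<close> commute R_nonzero
        R_orbits not_lower that)+
  then have "quasi_semiregular z"
    using quasi_semiregular_if_prime_order[OF \<open>prime r\<close> \<open>z ^^ r = id\<close>]
      vec.linear_0[OF linear[OF \<open>z \<in> G0\<close>]] by blast
  then show ?thesis
    using \<open>z \<in> G0\<close> by blast
qed

lemma linear_if_AGL_fixes_zero:
  fixes g :: "'f::{finite,field} ^ 'd \<Rightarrow> 'f ^ 'd"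
  assumes "g \<in> AGL" and "g 0 = 0"
  shows "Vector_Spaces.linear (*s) (*s) g"
proof -
  obtain A :: "'f ^ 'd ^ 'd" and b where g: "\<And>x. g x = A *v x + b"
    using assms(1) unfolding AGL_def by blast
  then have "g = (*v) A"
    using assms(2) by (simp add: fun_eq_iff)
  then show ?thesis
    by simp
qed

theorem theorem4p1:
  fixes G :: "(('f::{finite,field}) ^ 'd \<Rightarrow> 'f ^ 'd) set"
  assumes "affine_perm_group G"
    and "two_transitive G"
    and "CARD('f ^ 'd) \<ge> 3"
  shows "\<exists>g\<in>G. quasi_semiregular g"
proof -
  define G0 where "G0 = {g \<in> G. g 0 = 0}"
  have "perm_group G0"
    unfolding G0_def using assms(1)
    by (intro perm_group_point_stabilizer) (simp add: affine_perm_group_def)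
  moreover have "Vector_Spaces.linear (*s) (*s) g" if "g \<in> G0" for g
    using that assms(1) unfolding affine_perm_group_def G0_def
    by (intro linear_if_AGL_fixes_zero) auto
  moreover have "\<exists>g\<in>G0. g v = w" if "v \<noteq> 0" and "w \<noteq> 0" for v w
    using assms(2)[unfolded two_transitive_def, rule_format, of 0 v 0 w] that
    unfolding G0_def by auto
  ultimately obtain z where "z \<in> G0" and "quasi_semiregular z"
    using linear_perm_group_transitive_on_nonzero_has_quasi_semiregular[OF _ _ _ assms(3)]
    by metis
  then show ?thesis
    unfolding G0_def by blast
qed

end
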